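(* Let $A$ be a group and $H$ a subgroup of $A$ such that there exists an $H$-filtration of $A$. Let $B$ be an ERF group, $K$ a central subgroup of $B$, and $\phi: H \to K$ an isomorphism. Then there exist an $H$-filtration of $A$ and a $K$-filtration of $B$ which are $(H, K, \phi)$-compatible.
   Context: A filtration of a group $A$ is a family $\{A_\lambda\}_{\lambda\in\Lambda}$ of normal subgroups of finite index with $\bigcap A_\lambda=\{e\}$; for a subgroup $H$, it is an $H$-filtration if $\bigcap_\lambda HA_\lambda = H$. Given a $K$-filtration $\{B_\lambda\}_{\lambda\in\Lambda}$ of $B$ indexed by the same set, the two filtrations are $(H,K,\phi)$-compatible if for each $\lambda$ the map $hA_\lambda\mapsto\phi(h)B_\lambda$ is well defined and is an isomorphism $HA_\lambda/A_\lambda\to KB_\lambda/B_\lambda$. A subgroup is profinitely closed if it equals the intersection of all finite-index subgroups containing it; a group is ERF (extended residually finite) if all its subgroups are profinitely closed. *)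

theory Defs
  imports "HOL-Algebra.Algebra"
begin

definition filtration :: "('a, 'm) monoid_scheme \<Rightarrow> 'i set \<Rightarrow> ('i \<Rightarrow> 'a set) \<Rightarrow> bool" where
  "filtration A I N \<longleftrightarrow>
     (\<forall>i\<in>I. N i \<lhd> A \<and> finite (rcosets\<^bsub>A\<^esub> (N i))) \<and>
     carrier A \<inter> (\<Inter>i\<in>I. N i) = {\<one>\<^bsub>A\<^esub>}"

definition H_filtration :: "('a, 'm) monoid_scheme \<Rightarrow> 'a set \<Rightarrow> 'i set \<Rightarrow> ('i \<Rightarrow> 'a set) \<Rightarrow> bool" where
  "H_filtration A H I N \<longleftrightarrow>
     filtration A I N \<and> carrier A \<inter> (\<Inter>i\<in>I. H <#>\<^bsub>A\<^esub> N i) = H"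

definition induced_map ::
  "('a, 'm) monoid_scheme \<Rightarrow> ('b, 'n) monoid_scheme \<Rightarrow> 'a set \<Rightarrow> ('a \<Rightarrow> 'b) \<Rightarrow> 'a set \<Rightarrow> 'b set
     \<Rightarrow> 'a set \<Rightarrow> 'b set" where
  "induced_map A B H \<phi> N M C = (SOME D. \<exists>h\<in>H. C = N #>\<^bsub>A\<^esub> h \<and> D = M #>\<^bsub>B\<^esub> \<phi> h)"

definition compatible ::
  "('a, 'm) monoid_scheme \<Rightarrow> ('b, 'n) monoid_scheme \<Rightarrow> 'a set \<Rightarrow> 'b set \<Rightarrow> ('a \<Rightarrow> 'b)
     \<Rightarrow> 'i set \<Rightarrow> ('i \<Rightarrow> 'a set) \<Rightarrow> ('i \<Rightarrow> 'b set) \<Rightarrow> bool" where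
  "compatible A B H K \<phi> I N M \<longleftrightarrow>
     (\<forall>i\<in>I.
        (\<forall>h\<in>H. \<forall>h'\<in>H. N i #>\<^bsub>A\<^esub> h = N i #>\<^bsub>A\<^esub> h' \<longrightarrow> M i #>\<^bsub>B\<^esub> \<phi> h = M i #>\<^bsub>B\<^esub> \<phi> h') \<and>
        induced_map A B H \<phi> (N i) (M i)
          \<in> iso ((A\<lparr>carrier := H <#>\<^bsub>A\<^esub> N i\<rparr>) Mod (N i))
                ((B\<lparr>carrier := K <#>\<^bsub>B\<^esub> M i\<rparr>) Mod (M i)))"

definition profinitely_closed :: "('a, 'm) monoid_scheme \<Rightarrow> 'a set \<Rightarrow> bool" where
  "profinitely_closed G S \<longleftrightarrow>
     S = carrier G \<inter> \<Inter>{F. subgroup F G \<and> S \<subseteq> F \<and> finite (rcosets\<^bsub>G\<^esub> F)}"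

definition ERF :: "('a, 'm) monoid_scheme \<Rightarrow> bool" where
  "ERF G \<longleftrightarrow> (\<forall>S. subgroup S G \<longrightarrow> profinitely_closed G S)"

definition central_subgroup :: "'a set \<Rightarrow> ('a, 'm) monoid_scheme \<Rightarrow> bool" where
  "central_subgroup K G \<longleftrightarrow> subgroup K G \<and>
     (\<forall>k\<in>K. \<forall>g\<in>carrier G. k \<otimes>\<^bsub>G\<^esub> g = g \<otimes>\<^bsub>G\<^esub> k)"

end

theory Submission
  imports Defs
begin

text \<open>
  Call a pair \<open>(N, M)\<close> of finite-index normal subgroups \<open>N \<lhd> A\<close>, \<open>M \<lhd> B\<close> compatible if
  \<open>M \<inter> K = \<phi> ` (H \<inter> N)\<close>. This says exactly that \<open>h N \<mapsto> \<phi> h M\<close> is well defined and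
  injective on \<open>HN/N\<close>, and normality of \<open>N\<close> and \<open>M\<close> makes it a homomorphism onto \<open>KM/M\<close>.
  So indexing both families by all compatible pairs gives \<open>(H, K, \<phi>)\<close>-compatible families,
  and it remains to find enough compatible pairs.

  Every finite-index normal \<open>N\<close> has a partner \<open>M\<close> inside any finite-index \<open>F \<supseteq> K\<close>: the
  subgroup \<open>L = \<phi> ` (H \<inter> N)\<close> has finite index in \<open>K\<close>, ERF separates each of the finitely many
  other cosets of \<open>L\<close> in \<open>K\<close> from \<open>L\<close> by a finite-index subgroup, and the normal core of the
  intersection of these subgroups with \<open>F\<close> still contains \<open>L\<close>, because \<open>L\<close> is central and
  hence normal. Partners of the members of the given \<open>H\<close>-filtration make the first components
  an \<open>H\<close>-filtration and separate \<open>K - {1}\<close> from \<open>1\<close>; partners of \<open>A\<close> inside finite-index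
  subgroups \<open>F \<supseteq> K\<close> avoiding a given \<open>b \<notin> K\<close> separate \<open>B - K\<close> from \<open>K\<close>.
\<close>

lemma finite_image_factor:
  assumes "finite (g ` S)" and "\<And>x y. x \<in> S \<Longrightarrow> y \<in> S \<Longrightarrow> g x = g y \<Longrightarrow> f x = f y"
  shows "finite (f ` S)"
proof -
  have "f ` S \<subseteq> (\<lambda>c. f (SOME x. x \<in> S \<and> g x = c)) ` g ` S"
  proof
    fix y assume "y \<in> f ` S"
    then obtain x where x: "x \<in> S" "y = f x" by blast
    then have "y = f (SOME x'. x' \<in> S \<and> g x' = g x)"
      by (metis (mono_tags, lifting) assms(2) someI)
    then show "y \<in> (\<lambda>c. f (SOME x. x \<in> S \<and> g x = c)) ` g ` S" using x by blast
  qed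
  then show ?thesis using assms(1) finite_subset by blast
qed

lemma rcosets_carrier_update: "rcosets\<^bsub>G\<lparr>carrier := K\<rparr>\<^esub> L = (\<lambda>k. L #>\<^bsub>G\<^esub> k) ` K"
  by (auto simp: RCOSETS_def)

definition normal_core :: "('a, 'm) monoid_scheme \<Rightarrow> 'a set \<Rightarrow> 'a set" where
  "normal_core G F = {g \<in> carrier G. \<forall>x\<in>carrier G. x \<otimes>\<^bsub>G\<^esub> g \<otimes>\<^bsub>G\<^esub> inv\<^bsub>G\<^esub> x \<in> F}"

lemma ERF_separates:
  assumes "ERF G" "subgroup S G" "g \<in> carrier G" "g \<notin> S"
  shows "\<exists>F. subgroup F G \<and> finite (rcosets\<^bsub>G\<^esub> F) \<and> S \<subseteq> F \<and> g \<notin> F"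
proof -
  have "S = carrier G \<inter> \<Inter>{F. subgroup F G \<and> S \<subseteq> F \<and> finite (rcosets\<^bsub>G\<^esub> F)}"
    using assms(1,2) by (simp add: ERF_def profinitely_closed_def)
  then show ?thesis using assms(3,4) by blast
qed

context group
begin

lemma rcos_eq_iff:
  assumes "subgroup N G" "x \<in> carrier G" "y \<in> carrier G"
  shows "N #> x = N #> y \<longleftrightarrow> x \<otimes> inv y \<in> N"
  using assms repr_independence repr_independenceD subgroup.rcos_module[OF assms(1) is_group]
  by metis

lemma finite_rcosetsI:
  assumes "subgroup L G" and "finite (\<sigma> ` carrier G)"
    and "\<And>g g'. g \<in> carrier G \<Longrightarrow> g' \<in> carrier G \<Longrightarrow> \<sigma> g = \<sigma> g' \<Longrightarrow> g \<otimes> inv g' \<in> L"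
  shows "finite (rcosets L)"
proof -
  have "finite ((\<lambda>g. L #> g) ` carrier G)"
    using assms(2) by (rule finite_image_factor) (simp add: assms(1,3) rcos_eq_iff)
  then show ?thesis by (simp add: RCOSETS_def UNION_singleton_eq_range)
qed

lemma finite_rcosets_self: "finite (rcosets (carrier G))"
proof -
  have "rcosets (carrier G) = {carrier G}"
    using coset_join2[OF _ subgroup_self] by (auto simp: RCOSETS_def)
  then show ?thesis by simp
qed

lemma subgroup_carrier_Inter:
  assumes "\<And>F. F \<in> S \<Longrightarrow> subgroup F G"
  shows "subgroup (carrier G \<inter> \<Inter>S) G"
  using subgroups_Inter[of "insert (carrier G) S"] assms subgroup_self by auto

lemma finite_rcosets_Inter:
  assumes "finite S" and "\<And>F. F \<in> S \<Longrightarrow> subgroup F G \<and> finite (rcosets F)"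
  shows "finite (rcosets (carrier G \<inter> \<Inter>S))"
proof (rule finite_rcosetsI[where \<sigma> = "\<lambda>g. \<lambda>F\<in>S. F #> g"])
  show "subgroup (carrier G \<inter> \<Inter>S) G"
    using assms(2) by (blast intro: subgroup_carrier_Inter)
  have "(\<lambda>g. \<lambda>F\<in>S. F #> g) ` carrier G \<subseteq> PiE S (\<lambda>F. rcosets F)"
    using assms(2) by (auto intro!: rcosetsI subgroup.subset)
  then show "finite ((\<lambda>g. \<lambda>F\<in>S. F #> g) ` carrier G)"
    using assms finite_PiE finite_subset by (metis (no_types, lifting))
next
  fix g g' assume g: "g \<in> carrier G" "g' \<in> carrier G" and eq: "(\<lambda>F\<in>S. F #> g) = (\<lambda>F\<in>S. F #> g')"
  have "g \<otimes> inv g' \<in> F" if "F \<in> S" for F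
    using fun_cong[OF eq, of F] that assms(2) rcos_eq_iff g by auto
  then show "g \<otimes> inv g' \<in> carrier G \<inter> \<Inter>S" using g by auto
qed

lemma normal_core_subset: "normal_core G F \<subseteq> F"
  unfolding normal_core_def by (auto dest: bspec[where x = \<one>])

lemma normal_core_normal:
  assumes F: "subgroup F G"
  shows "normal_core G F \<lhd> G"
proof (rule normal_invI)
  show "subgroup (normal_core G F) G"
  proof (rule subgroupI)
    show "normal_core G F \<subseteq> carrier G" by (auto simp: normal_core_def)
    show "normal_core G F \<noteq> {}"
      using subgroup.one_closed[OF F] by (auto simp: normal_core_def)
  next
    fix g assume g: "g \<in> normal_core G F"
    have "x \<otimes> inv g \<otimes> inv x = inv (x \<otimes> g \<otimes> inv x)" if "x \<in> carrier G" for x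
      using g that by (simp add: normal_core_def inv_mult_group m_assoc)
    then show "inv g \<in> normal_core G F"
      using g subgroup.m_inv_closed[OF F] by (auto simp: normal_core_def)
  next
    fix g h assume g: "g \<in> normal_core G F" and h: "h \<in> normal_core G F"
    have "x \<otimes> (g \<otimes> h) \<otimes> inv x = (x \<otimes> g \<otimes> inv x) \<otimes> (x \<otimes> h \<otimes> inv x)" if "x \<in> carrier G" for x
      using g h that by (simp add: normal_core_def m_assoc) (simp add: m_assoc[symmetric])
    then show "g \<otimes> h \<in> normal_core G F"
      using g h subgroup.m_closed[OF F] by (auto simp: normal_core_def)
  qed
next
  fix y g assume y: "y \<in> carrier G" and g: "g \<in> normal_core G F"
  have "x \<otimes> (y \<otimes> g \<otimes> inv y) \<otimes> inv x = (x \<otimes> y) \<otimes> g \<otimes> inv (x \<otimes> y)" if "x \<in> carrier G" for x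
    using g y that by (simp add: normal_core_def m_assoc inv_mult_group)
  then show "y \<otimes> g \<otimes> inv y \<in> normal_core G F"
    using g y by (auto simp: normal_core_def)
qed

lemma normal_subset_normal_core:
  assumes "N \<lhd> G" and "N \<subseteq> F"
  shows "N \<subseteq> normal_core G F"
  using assms normal_invE[OF assms(1)] by (auto simp: normal_core_def subgroup.mem_carrier)

lemma finite_rcosets_normal_core:
  assumes F: "subgroup F G" "finite (rcosets F)"
  shows "finite (rcosets (normal_core G F))"
proof (rule finite_rcosetsI[where \<sigma> = "\<lambda>g. \<lambda>C\<in>rcosets F. C #> g"])
  show "subgroup (normal_core G F) G"
    using normal_core_normal[OF F(1)] by (rule normal_imp_subgroup)
  have "C #> g \<in> rcosets F" if "C \<in> rcosets F" "g \<in> carrier G" for C g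
    using that F(1) by (auto simp: RCOSETS_def coset_mult_assoc subgroup.subset)
  then have "(\<lambda>g. \<lambda>C\<in>rcosets F. C #> g) ` carrier G \<subseteq> PiE (rcosets F) (\<lambda>_. rcosets F)"
    by auto
  then show "finite ((\<lambda>g. \<lambda>C\<in>rcosets F. C #> g) ` carrier G)"
    using F(2) finite_PiE finite_subset by (metis (no_types, lifting))
next
  fix g g' assume g: "g \<in> carrier G" "g' \<in> carrier G"
    and eq: "(\<lambda>C\<in>rcosets F. C #> g) = (\<lambda>C\<in>rcosets F. C #> g')"
  have "x \<otimes> (g \<otimes> inv g') \<otimes> inv x \<in> F" if x: "x \<in> carrier G" for x
  proof -
    have "F #> x #> g = F #> x #> g'"
      using fun_cong[OF eq, of "F #> x"] x F(1) by (simp add: rcosetsI subgroup.subset)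
    then have "F #> (x \<otimes> g) = F #> (x \<otimes> g')"
      using x g F(1) by (simp add: coset_mult_assoc subgroup.subset)
    then have "(x \<otimes> g) \<otimes> inv (x \<otimes> g') \<in> F"
      using x g F(1) by (simp add: rcos_eq_iff)
    then show ?thesis
      using x g by (simp add: m_assoc inv_mult_group)
  qed
  then show "g \<otimes> inv g' \<in> normal_core G F"
    using g by (simp add: normal_core_def)
qed

lemma ERF_avoids_coset:
  assumes "ERF G" "subgroup L G" "k \<in> carrier G" "L #> k \<noteq> L"
  shows "\<exists>F. subgroup F G \<and> finite (rcosets F) \<and> L \<subseteq> F \<and> \<not> L #> k \<subseteq> F"
proof -
  have "k \<notin> L" using assms(2-4) coset_join2 by blast
  then obtain F where "subgroup F G" "finite (rcosets F)" "L \<subseteq> F" "k \<notin> F"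
    using ERF_separates[OF assms(1-3)] by blast
  moreover have "k \<in> L #> k" using rcos_self[OF assms(3,2)] .
  ultimately show ?thesis by blast
qed

lemma ERF_exists_finite_index_trace:
  assumes ERF: "ERF G" and K: "subgroup K G" and L: "subgroup L G" "L \<subseteq> K"
    and fin: "finite (rcosets\<^bsub>G\<lparr>carrier := K\<rparr>\<^esub> L)"
    and F: "subgroup F G" "finite (rcosets F)" "K \<subseteq> F"
  shows "\<exists>M. subgroup M G \<and> finite (rcosets M) \<and> M \<subseteq> F \<and> M \<inter> K = L"
proof -
  let ?Q = "(\<lambda>k. L #> k) ` K - {L}"
  have "\<exists>F'. subgroup F' G \<and> finite (rcosets F') \<and> L \<subseteq> F' \<and> \<not> q \<subseteq> F'" if "q \<in> ?Q" for q
  proof -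
    obtain k where k: "k \<in> K" "q = L #> k" "L #> k \<noteq> L" using \<open>q \<in> ?Q\<close> by blast
    then have "k \<in> carrier G" using subgroup.mem_carrier[OF K] by blast
    then show ?thesis using ERF_avoids_coset[OF ERF L(1) _ k(3)] k(2) by simp
  qed
  then obtain Fs where Fs: "\<And>q. q \<in> ?Q \<Longrightarrow>
      subgroup (Fs q) G \<and> finite (rcosets (Fs q)) \<and> L \<subseteq> Fs q \<and> \<not> q \<subseteq> Fs q"
    by metis
  define M where "M = carrier G \<inter> \<Inter>(insert F (Fs ` ?Q))"
  have "finite ?Q" using fin by (simp add: rcosets_carrier_update)
  then have M_index: "finite (rcosets M)"
    unfolding M_def using Fs F by (intro finite_rcosets_Inter) auto
  have M_subgroup: "subgroup M G"
    unfolding M_def using Fs F by (intro subgroup_carrier_Inter) auto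
  have "L \<subseteq> M" unfolding M_def using L F Fs subgroup.subset by blast
  moreover have "M \<inter> K \<subseteq> L"
  proof
    fix y assume y: "y \<in> M \<inter> K"
    show "y \<in> L"
    proof (rule ccontr)
      assume "y \<notin> L"
      have yc: "y \<in> carrier G" using y by (simp add: M_def)
      have "y \<in> L #> y" by (rule rcos_self[OF yc L(1)])
      then have Q: "L #> y \<in> ?Q" using y \<open>y \<notin> L\<close> by auto
      have "y \<in> Fs (L #> y)" using y Q by (auto simp: M_def)
      then have "L #> y \<subseteq> Fs (L #> y)"
        using Fs[OF Q] by (auto simp: r_coset_def intro: subgroup.m_closed)
      then show False using Fs[OF Q] by blast
    qed
  qed
  ultimately have "M \<inter> K = L" using L(2) by blast
  moreover have "M \<subseteq> F" by (auto simp: M_def)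
  ultimately show ?thesis using M_subgroup M_index by blast
qed

lemma ERF_exists_normal_finite_index_trace:
  assumes "ERF G" "subgroup K G" "L \<lhd> G" "L \<subseteq> K"
    and "finite (rcosets\<^bsub>G\<lparr>carrier := K\<rparr>\<^esub> L)"
    and "subgroup F G" "finite (rcosets F)" "K \<subseteq> F"
  shows "\<exists>M. M \<lhd> G \<and> finite (rcosets M) \<and> M \<subseteq> F \<and> M \<inter> K = L"
proof -
  obtain M where M: "subgroup M G" "finite (rcosets M)" "M \<subseteq> F" "M \<inter> K = L"
    using ERF_exists_finite_index_trace assms normal_imp_subgroup by metis
  have "L \<subseteq> normal_core G M" using normal_subset_normal_core assms(3) M(4) by blast
  then have "normal_core G M \<inter> K = L" using normal_core_subset M(4) assms(4) by blast
  then show ?thesis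
    using normal_core_normal finite_rcosets_normal_core normal_core_subset M by blast
qed

lemma central_subgroup_imp_normal:
  assumes "central_subgroup K G" "subgroup L G" "L \<subseteq> K"
  shows "L \<lhd> G"
proof (rule normal_invI[OF assms(2)])
  fix x l assume x: "x \<in> carrier G" and l: "l \<in> L"
  then have "x \<otimes> l = l \<otimes> x" using assms by (metis central_subgroup_def subsetD)
  then have "x \<otimes> l \<otimes> inv x = l" using x l assms(2) by (simp add: m_assoc subgroup.mem_carrier)
  then show "x \<otimes> l \<otimes> inv x \<in> L" using l by simp
qed

lemma subgroups_subset_set_mult:
  assumes "subgroup H G" "subgroup N G"
  shows "H \<subseteq> H <#> N" and "N \<subseteq> H <#> N"
proof -
  have "h \<otimes> \<one> \<in> H <#> N" if "h \<in> H" for h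
    using that subgroup.one_closed[OF assms(2)] by (auto simp: set_mult_def)
  then show "H \<subseteq> H <#> N" using assms(1) by (auto simp: subgroup.mem_carrier)
  have "\<one> \<otimes> n \<in> H <#> N" if "n \<in> N" for n
    using that subgroup.one_closed[OF assms(1)] by (auto simp: set_mult_def)
  then show "N \<subseteq> H <#> N" using assms(2) by (auto simp: subgroup.mem_carrier)
qed

lemma carrier_Mod_set_mult:
  assumes "subgroup H G" "N \<lhd> G"
  shows "carrier (G\<lparr>carrier := H <#> N\<rparr> Mod N) = (\<lambda>h. N #> h) ` H"
proof -
  have N: "subgroup N G" using assms(2) by (rule normal_imp_subgroup)
  have "N #> (h \<otimes> n) = N #> h" if "h \<in> H" "n \<in> N" for h n
    using that assms(1) N normal.inv_op_closed2[OF assms(2), of h n]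
    by (simp add: rcos_eq_iff subgroup.mem_carrier)
  then have "(\<lambda>x. N #> x) ` (H <#> N) \<subseteq> (\<lambda>h. N #> h) ` H"
    by (auto simp: set_mult_def)
  moreover have "(\<lambda>h. N #> h) ` H \<subseteq> (\<lambda>x. N #> x) ` (H <#> N)"
    using subgroups_subset_set_mult(1)[OF assms(1) N] by (rule image_mono)
  ultimately show ?thesis by (simp add: carrier_FactGroup)
qed

lemma H_filtrationI:
  assumes "subgroup H G"
    and "\<And>i. i \<in> I \<Longrightarrow> N i \<lhd> G \<and> finite (rcosets N i)"
    and "\<And>g. g \<in> carrier G - H \<Longrightarrow> \<exists>i\<in>I. g \<notin> H <#> N i"
    and "\<And>h. h \<in> H - {\<one>} \<Longrightarrow> \<exists>i\<in>I. h \<notin> N i"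
  shows "H_filtration G H I N"
proof -
  have N_sub: "subgroup (N i) G" if "i \<in> I" for i
    using assms(2)[OF that] normal_imp_subgroup by blast
  have H_in: "H \<subseteq> H <#> N i" and N_in: "N i \<subseteq> H <#> N i" if "i \<in> I" for i
    using subgroups_subset_set_mult[OF assms(1) N_sub[OF that]] by auto
  have "carrier G \<inter> (\<Inter>i\<in>I. N i) = {\<one>}"
  proof (intro equalityI subsetI)
    fix g assume g: "g \<in> carrier G \<inter> (\<Inter>i\<in>I. N i)"
    show "g \<in> {\<one>}"
    proof (rule ccontr)
      assume "g \<notin> {\<one>}"
      then obtain i where "i \<in> I" "g \<notin> N i"
        using g assms(3,4) N_in by (cases "g \<in> H") blast+
      then show False using g by blast
    qed
  qed (use subgroup.one_closed[OF N_sub] in auto)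
  moreover have "carrier G \<inter> (\<Inter>i\<in>I. H <#> N i) = H"
  proof (intro equalityI subsetI)
    fix g assume g: "g \<in> carrier G \<inter> (\<Inter>i\<in>I. H <#> N i)"
    show "g \<in> H"
    proof (rule ccontr)
      assume "g \<notin> H"
      then obtain i where "i \<in> I" "g \<notin> H <#> N i" using g assms(3) by blast
      then show False using g by blast
    qed
  qed (use H_in subgroup.subset[OF assms(1)] in auto)
  ultimately show ?thesis
    using assms(2) by (simp add: H_filtration_def filtration_def)
qed

end

lemma H_filtrationD:
  assumes "H_filtration G H I N"
  shows "i \<in> I \<Longrightarrow> N i \<lhd> G" and "i \<in> I \<Longrightarrow> finite (rcosets\<^bsub>G\<^esub> N i)"
    and "g \<in> carrier G - H \<Longrightarrow> \<exists>i\<in>I. g \<notin> H <#>\<^bsub>G\<^esub> N i"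
    and "g \<in> carrier G - {\<one>\<^bsub>G\<^esub>} \<Longrightarrow> \<exists>i\<in>I. g \<notin> N i"
  using assms unfolding H_filtration_def filtration_def by blast+

locale subgroup_iso = A: group A + B: group B
  for A :: "('a, 'm) monoid_scheme" and B :: "('b, 'n) monoid_scheme" +
  fixes H :: "'a set" and K :: "'b set" and \<phi> :: "'a \<Rightarrow> 'b"
  assumes H: "subgroup H A" and K: "subgroup K B"
    and iso: "\<phi> \<in> iso (A\<lparr>carrier := H\<rparr>) (B\<lparr>carrier := K\<rparr>)"
begin

lemma phi_hom: "group_hom (A\<lparr>carrier := H\<rparr>) (B\<lparr>carrier := K\<rparr>) \<phi>"
  using iso subgroup.subgroup_is_group[OF H A.is_group] subgroup.subgroup_is_group[OF K B.is_group]
  by (simp add: group_hom_def group_hom_axioms_def iso_imp_homomorphism)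

lemma phi_image: "\<phi> ` H = K"
  using iso by (simp add: iso_def bij_betw_def)

lemma phi_inj: "inj_on \<phi> H"
  using iso by (simp add: iso_def bij_betw_def)

lemma phi_closed: "h \<in> H \<Longrightarrow> \<phi> h \<in> K"
  using phi_image by blast

lemma phi_mult: "h \<in> H \<Longrightarrow> h' \<in> H \<Longrightarrow> \<phi> (h \<otimes>\<^bsub>A\<^esub> h') = \<phi> h \<otimes>\<^bsub>B\<^esub> \<phi> h'"
  using group_hom.hom_mult[OF phi_hom] by fastforce

lemma phi_inv: "h \<in> H \<Longrightarrow> \<phi> (inv\<^bsub>A\<^esub> h) = inv\<^bsub>B\<^esub> \<phi> h"
  using group_hom.hom_inv[OF phi_hom] H K phi_closed by fastforce

lemma phi_one: "\<phi> \<one>\<^bsub>A\<^esub> = \<one>\<^bsub>B\<^esub>"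
  using group_hom.hom_one[OF phi_hom] by simp

lemma subgroup_phi_image_Int:
  assumes "subgroup N A"
  shows "subgroup (\<phi> ` (H \<inter> N)) B"
proof -
  have "subgroup (H \<inter> N) (A\<lparr>carrier := H\<rparr>)"
    using A.subgroup_incl A.subgroups_Inter_pair H assms by blast
  then have "subgroup (\<phi> ` (H \<inter> N)) (B\<lparr>carrier := K\<rparr>)"
    by (rule group_hom.subgroup_img_is_subgroup[OF phi_hom])
  then show ?thesis by (rule B.incl_subgroup[OF K])
qed

lemma rcos_phi_eq_iff:
  assumes N: "subgroup N A" and M: "subgroup M B" and MK: "M \<inter> K = \<phi> ` (H \<inter> N)"
    and h: "h \<in> H" "h' \<in> H"
  shows "M #>\<^bsub>B\<^esub> \<phi> h = M #>\<^bsub>B\<^esub> \<phi> h' \<longleftrightarrow> N #>\<^bsub>A\<^esub> h = N #>\<^bsub>A\<^esub> h'"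
proof -
  let ?d = "h \<otimes>\<^bsub>A\<^esub> inv\<^bsub>A\<^esub> h'"
  have d: "?d \<in> H" using h H by (simp add: subgroup.m_closed subgroup.m_inv_closed)
  have phi_d: "\<phi> ?d = \<phi> h \<otimes>\<^bsub>B\<^esub> inv\<^bsub>B\<^esub> \<phi> h'"
    using h H by (simp add: phi_mult phi_inv subgroup.m_inv_closed)
  have "M #>\<^bsub>B\<^esub> \<phi> h = M #>\<^bsub>B\<^esub> \<phi> h' \<longleftrightarrow> \<phi> ?d \<in> M \<inter> K"
    using h M K phi_d phi_closed[OF d] by (simp add: B.rcos_eq_iff phi_closed subgroup.mem_carrier)
  also have "\<dots> \<longleftrightarrow> ?d \<in> H \<inter> N"
    using MK inj_on_image_mem_iff[OF phi_inj d] by simp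
  also have "\<dots> \<longleftrightarrow> N #>\<^bsub>A\<^esub> h = N #>\<^bsub>A\<^esub> h'"
    using h H N d by (simp add: A.rcos_eq_iff subgroup.mem_carrier)
  finally show ?thesis .
qed

lemma induced_map_rcos:
  assumes "subgroup N A" "subgroup M B" "M \<inter> K = \<phi> ` (H \<inter> N)" "h \<in> H"
  shows "induced_map A B H \<phi> N M (N #>\<^bsub>A\<^esub> h) = M #>\<^bsub>B\<^esub> \<phi> h"
  unfolding induced_map_def
proof (rule someI2_ex)
  show "\<exists>D. \<exists>h'\<in>H. N #>\<^bsub>A\<^esub> h = N #>\<^bsub>A\<^esub> h' \<and> D = M #>\<^bsub>B\<^esub> \<phi> h'"
    using assms(4) by blast
next
  fix D assume "\<exists>h'\<in>H. N #>\<^bsub>A\<^esub> h = N #>\<^bsub>A\<^esub> h' \<and> D = M #>\<^bsub>B\<^esub> \<phi> h'"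
  then show "D = M #>\<^bsub>B\<^esub> \<phi> h" using rcos_phi_eq_iff assms by metis
qed

lemma carrier_Mod_K:
  assumes "M \<lhd> B"
  shows "carrier (B\<lparr>carrier := K <#>\<^bsub>B\<^esub> M\<rparr> Mod M) = (\<lambda>h. M #>\<^bsub>B\<^esub> \<phi> h) ` H"
  using B.carrier_Mod_set_mult[OF K assms] by (simp add: image_image flip: phi_image)

lemma induced_map_hom:
  assumes N: "N \<lhd> A" and M: "M \<lhd> B" and MK: "M \<inter> K = \<phi> ` (H \<inter> N)"
  shows "induced_map A B H \<phi> N M
           \<in> hom (A\<lparr>carrier := H <#>\<^bsub>A\<^esub> N\<rparr> Mod N) (B\<lparr>carrier := K <#>\<^bsub>B\<^esub> M\<rparr> Mod M)"
proof -
  let ?f = "induced_map A B H \<phi> N M"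
  have f: "?f (N #>\<^bsub>A\<^esub> h) = M #>\<^bsub>B\<^esub> \<phi> h" if "h \<in> H" for h
    using induced_map_rcos[OF normal_imp_subgroup[OF N] normal_imp_subgroup[OF M] MK that] .
  note carrier_A = A.carrier_Mod_set_mult[OF H N]
  show ?thesis
  proof (rule homI)
    fix x assume "x \<in> carrier (A\<lparr>carrier := H <#>\<^bsub>A\<^esub> N\<rparr> Mod N)"
    then show "?f x \<in> carrier (B\<lparr>carrier := K <#>\<^bsub>B\<^esub> M\<rparr> Mod M)"
      unfolding carrier_A carrier_Mod_K[OF M] using f by auto
  next
    fix x y assume "x \<in> carrier (A\<lparr>carrier := H <#>\<^bsub>A\<^esub> N\<rparr> Mod N)"
      and "y \<in> carrier (A\<lparr>carrier := H <#>\<^bsub>A\<^esub> N\<rparr> Mod N)"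
    then obtain h h' where h: "h \<in> H" "h' \<in> H" and xy: "x = N #>\<^bsub>A\<^esub> h" "y = N #>\<^bsub>A\<^esub> h'"
      unfolding carrier_A by blast
    have hc: "h \<in> carrier A" "h' \<in> carrier A"
      using h subgroup.mem_carrier[OF H] by auto
    have phi_hc: "\<phi> h \<in> carrier B" "\<phi> h' \<in> carrier B"
      using h phi_closed subgroup.mem_carrier[OF K] by auto
    have "x <#>\<^bsub>A\<^esub> y = N #>\<^bsub>A\<^esub> (h \<otimes>\<^bsub>A\<^esub> h')"
      using xy normal.rcos_sum[OF N hc] by simp
    then have "?f (x <#>\<^bsub>A\<^esub> y) = M #>\<^bsub>B\<^esub> (\<phi> h \<otimes>\<^bsub>B\<^esub> \<phi> h')"
      using f[OF subgroup.m_closed[OF H h]] phi_mult[OF h] by simp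
    also have "\<dots> = ?f x <#>\<^bsub>B\<^esub> ?f y"
      using xy f h normal.rcos_sum[OF M phi_hc] by simp
    finally show "?f (x \<otimes>\<^bsub>A\<lparr>carrier := H <#>\<^bsub>A\<^esub> N\<rparr> Mod N\<^esub> y)
        = ?f x \<otimes>\<^bsub>B\<lparr>carrier := K <#>\<^bsub>B\<^esub> M\<rparr> Mod M\<^esub> ?f y"
      by simp
  qed
qed

lemma induced_map_iso:
  assumes N: "N \<lhd> A" and M: "M \<lhd> B" and MK: "M \<inter> K = \<phi> ` (H \<inter> N)"
  shows "induced_map A B H \<phi> N M
           \<in> iso (A\<lparr>carrier := H <#>\<^bsub>A\<^esub> N\<rparr> Mod N) (B\<lparr>carrier := K <#>\<^bsub>B\<^esub> M\<rparr> Mod M)"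
proof -
  let ?f = "induced_map A B H \<phi> N M"
  have NA: "subgroup N A" and MB: "subgroup M B" using N M by (simp_all add: normal_imp_subgroup)
  have f: "?f (N #>\<^bsub>A\<^esub> h) = M #>\<^bsub>B\<^esub> \<phi> h" if "h \<in> H" for h
    using induced_map_rcos[OF NA MB MK that] .
  have "inj_on ?f ((\<lambda>h. N #>\<^bsub>A\<^esub> h) ` H)"
  proof (rule inj_onI)
    fix x y assume "x \<in> (\<lambda>h. N #>\<^bsub>A\<^esub> h) ` H" "y \<in> (\<lambda>h. N #>\<^bsub>A\<^esub> h) ` H" "?f x = ?f y"
    then obtain h h' where "h \<in> H" "h' \<in> H" "x = N #>\<^bsub>A\<^esub> h" "y = N #>\<^bsub>A\<^esub> h'"
      and "M #>\<^bsub>B\<^esub> \<phi> h = M #>\<^bsub>B\<^esub> \<phi> h'"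
      using f by auto
    then show "x = y" using rcos_phi_eq_iff[OF NA MB MK] by blast
  qed
  moreover have "?f ` (\<lambda>h. N #>\<^bsub>A\<^esub> h) ` H = (\<lambda>h. M #>\<^bsub>B\<^esub> \<phi> h) ` H"
    by (simp add: image_image f)
  ultimately show ?thesis
    using induced_map_hom[OF N M MK]
    by (simp add: iso_def bij_betw_def A.carrier_Mod_set_mult[OF H N] carrier_Mod_K[OF M])
qed

definition compatible_pairs :: "('a set \<times> 'b set) set" where
  "compatible_pairs = {(N, M). N \<lhd> A \<and> finite (rcosets\<^bsub>A\<^esub> N) \<and> M \<lhd> B \<and> finite (rcosets\<^bsub>B\<^esub> M)
                                \<and> M \<inter> K = \<phi> ` (H \<inter> N)}"

lemma compatible_compatible_pairs: "compatible A B H K \<phi> compatible_pairs fst snd"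
  unfolding compatible_def
proof (rule ballI, rule conjI)
  fix i assume "i \<in> compatible_pairs"
  then obtain N M where i: "i = (N, M)" "N \<lhd> A" "M \<lhd> B" "M \<inter> K = \<phi> ` (H \<inter> N)"
    by (auto simp: compatible_pairs_def)
  then show "\<forall>h\<in>H. \<forall>h'\<in>H. fst i #>\<^bsub>A\<^esub> h = fst i #>\<^bsub>A\<^esub> h'
               \<longrightarrow> snd i #>\<^bsub>B\<^esub> \<phi> h = snd i #>\<^bsub>B\<^esub> \<phi> h'"
    using rcos_phi_eq_iff[OF normal_imp_subgroup normal_imp_subgroup] by simp
  show "induced_map A B H \<phi> (fst i) (snd i)
          \<in> iso (A\<lparr>carrier := H <#>\<^bsub>A\<^esub> fst i\<rparr> Mod fst i) (B\<lparr>carrier := K <#>\<^bsub>B\<^esub> snd i\<rparr> Mod snd i)"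
    using i induced_map_iso by simp
qed

lemma finite_rcosets_phi_image_Int:
  assumes N: "subgroup N A" "finite (rcosets\<^bsub>A\<^esub> N)"
  shows "finite (rcosets\<^bsub>B\<lparr>carrier := K\<rparr>\<^esub> (\<phi> ` (H \<inter> N)))"
proof -
  let ?L = "\<phi> ` (H \<inter> N)"
  have L: "subgroup ?L B" "?L \<inter> K = ?L"
    using subgroup_phi_image_Int[OF N(1)] phi_closed by auto
  have "rcosets\<^bsub>B\<lparr>carrier := K\<rparr>\<^esub> ?L = induced_map A B H \<phi> N ?L ` (\<lambda>h. N #>\<^bsub>A\<^esub> h) ` H"
    by (simp add: rcosets_carrier_update image_image induced_map_rcos[OF N(1) L] flip: phi_image)
  moreover have "(\<lambda>h. N #>\<^bsub>A\<^esub> h) ` H \<subseteq> rcosets\<^bsub>A\<^esub> N"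
    using A.rcosetsI subgroup.subset[OF N(1)] subgroup.mem_carrier[OF H] by blast
  ultimately show ?thesis using N(2) finite_subset by (metis finite_imageI)
qed

end

locale ERF_central_subgroup_iso = subgroup_iso +
  assumes ERF: "ERF B" and central: "central_subgroup K B"
begin

lemma exists_compatible_partner:
  assumes N: "N \<lhd> A" "finite (rcosets\<^bsub>A\<^esub> N)"
    and F: "subgroup F B" "finite (rcosets\<^bsub>B\<^esub> F)" "K \<subseteq> F"
  shows "\<exists>M. (N, M) \<in> compatible_pairs \<and> M \<subseteq> F"
proof -
  have NA: "subgroup N A" using N(1) by (rule normal_imp_subgroup)
  have "\<phi> ` (H \<inter> N) \<subseteq> K" using phi_closed by blast
  moreover have "\<phi> ` (H \<inter> N) \<lhd> B"
    using B.central_subgroup_imp_normal[OF central subgroup_phi_image_Int[OF NA]] phi_closed by blast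
  ultimately obtain M where "M \<lhd> B" "finite (rcosets\<^bsub>B\<^esub> M)" "M \<subseteq> F" "M \<inter> K = \<phi> ` (H \<inter> N)"
    using B.ERF_exists_normal_finite_index_trace[OF ERF K _ _ finite_rcosets_phi_image_Int[OF NA N(2)] F]
    by blast
  then show ?thesis using N unfolding compatible_pairs_def by blast
qed

lemma exists_compatible_partner_of_filtration:
  assumes "H_filtration A H I N" "l \<in> I"
  shows "\<exists>M. (N l, M) \<in> compatible_pairs"
  using exists_compatible_partner[OF H_filtrationD(1,2)[OF assms] B.subgroup_self B.finite_rcosets_self]
    subgroup.subset[OF K] by blast

lemma H_filtration_fst:
  assumes "H_filtration A H I N"
  shows "H_filtration A H compatible_pairs fst"
proof (rule A.H_filtrationI[OF H])
  fix i assume "i \<in> compatible_pairs"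
  then show "fst i \<lhd> A \<and> finite (rcosets\<^bsub>A\<^esub> fst i)" by (auto simp: compatible_pairs_def)
next
  fix g assume "g \<in> carrier A - H"
  then obtain l where l: "l \<in> I" "g \<notin> H <#>\<^bsub>A\<^esub> N l" using H_filtrationD(3)[OF assms] by blast
  then obtain M where "(N l, M) \<in> compatible_pairs"
    using exists_compatible_partner_of_filtration[OF assms] by blast
  then show "\<exists>i\<in>compatible_pairs. g \<notin> H <#>\<^bsub>A\<^esub> fst i" using l(2) by force
next
  fix h assume "h \<in> H - {\<one>\<^bsub>A\<^esub>}"
  then obtain l where l: "l \<in> I" "h \<notin> N l"
    using H_filtrationD(4)[OF assms] subgroup.mem_carrier[OF H] by blast
  then obtain M where "(N l, M) \<in> compatible_pairs"
    using exists_compatible_partner_of_filtration[OF assms] by blast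
  then show "\<exists>i\<in>compatible_pairs. h \<notin> fst i" using l(2) by force
qed

lemma H_filtration_snd:
  assumes "H_filtration A H I N"
  shows "H_filtration B K compatible_pairs snd"
proof (rule B.H_filtrationI[OF K])
  fix i assume "i \<in> compatible_pairs"
  then show "snd i \<lhd> B \<and> finite (rcosets\<^bsub>B\<^esub> snd i)" by (auto simp: compatible_pairs_def)
next
  fix b assume "b \<in> carrier B - K"
  then obtain F where F: "subgroup F B" "finite (rcosets\<^bsub>B\<^esub> F)" "K \<subseteq> F" "b \<notin> F"
    using ERF_separates[OF ERF K] by blast
  then obtain M where M: "(carrier A, M) \<in> compatible_pairs" "M \<subseteq> F"
    using exists_compatible_partner[OF A.normal_self A.finite_rcosets_self] by blast
  have "K <#>\<^bsub>B\<^esub> M \<subseteq> F"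
    using mono_set_mult[of K F M F B] F(3) M(2) B.subgroup_mult_id[OF F(1)] by simp
  then show "\<exists>i\<in>compatible_pairs. b \<notin> K <#>\<^bsub>B\<^esub> snd i" using M(1) F(4) by force
next
  fix b assume b: "b \<in> K - {\<one>\<^bsub>B\<^esub>}"
  then obtain h where h: "h \<in> H" "b = \<phi> h" using phi_image by blast
  then have "h \<in> carrier A - {\<one>\<^bsub>A\<^esub>}" using b phi_one subgroup.mem_carrier[OF H] by auto
  then obtain l where l: "l \<in> I" "h \<notin> N l" using H_filtrationD(4)[OF assms] by blast
  obtain M where M: "(N l, M) \<in> compatible_pairs"
    using exists_compatible_partner_of_filtration[OF assms l(1)] by blast
  then have "M \<inter> K = \<phi> ` (H \<inter> N l)" by (simp add: compatible_pairs_def)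
  then have "b \<notin> M" using b h l(2) inj_on_image_mem_iff[OF phi_inj h(1)] by blast
  then show "\<exists>i\<in>compatible_pairs. b \<notin> snd i" using M by force
qed

end

theorem theorem3p7:
  fixes A :: "('a, 'm) monoid_scheme" and B :: "('b, 'n) monoid_scheme"
    and H :: "'a set" and K :: "'b set" and \<phi> :: "'a \<Rightarrow> 'b"
  assumes "group A" and "subgroup H A"
    and "\<exists>(I :: 'c set) N. H_filtration A H I N"
    and "group B" and "ERF B" and "central_subgroup K B"
    and "\<phi> \<in> iso (A\<lparr>carrier := H\<rparr>) (B\<lparr>carrier := K\<rparr>)"
  shows "\<exists>(I :: ('a set \<times> 'b set) set) N M.
           H_filtration A H I N \<and> H_filtration B K I M \<and> compatible A B H K \<phi> I N M"
proof -
  have "subgroup K B" using assms(6) by (simp add: central_subgroup_def)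
  then interpret ERF_central_subgroup_iso A B H K \<phi>
    by (intro ERF_central_subgroup_iso.intro subgroup_iso.intro
          ERF_central_subgroup_iso_axioms.intro subgroup_iso_axioms.intro) (simp_all add: assms)
  obtain I :: "'c set" and N where "H_filtration A H I N" using assms(3) by blast
  then show ?thesis
    using H_filtration_fst H_filtration_snd compatible_compatible_pairs by (intro exI conjI)
qed

end
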